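(* Let $R$ be a commutative ring with identity whose set of zero-divisors $Z_R$ satisfies $Z_R\ne\{0\}$, let $n>1$, and let $r$ be the radius of the orthogonality graph $O(M_n(R))$. Then: (1) $2\le r\le 4$; (2) if $$\forall a_0\in Z_R\ \ \exists a_1,a_2\in R\setminus\{0\}\ \ \forall i,j\in\{0,1,2\},\ i\ne j:\ a_ia_j=0,$$ then $r\in\{2,3\}$; (3) $r=2$ if and only if there exists $c\in R\setminus\{0\}$ such that $\operatorname{Ann}(c)\cap\operatorname{Ann}(a)\ne 0$ for every $a\in Z_R$.
   Context: All rings are associative with identity. For a commutative ring $R$, $Z_R$ is the set of zero-divisors (including $0$) and $\operatorname{Ann}(a)=\{x\in R: ax=0\}$. The orthogonality graph $O(S)$ of a ring $S$ is the undirected graph whose vertices are the nonzero two-sided zero-divisors of $S$ (elements $x$ with $xy=0$ and $zx=0$ for some nonzero $y,z$), distinct vertices $x,y$ being adjacent iff $xy=yx=0$. $d(x,y)$ is graph distance, the eccentricity of a vertex $v$ is $\sup_w d(v,w)$ over all vertices $w$, and the radius is the minimum eccentricity over all vertices. *)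

theory Defs
  imports "HOL-Analysis.Analysis" "HOL-Library.Extended_Nat"
begin

text \<open>Zero-divisors (including 0) and annihilators in a commutative ring.\<close>
definition zero_divisors :: "'a::comm_ring_1 set" where
  "zero_divisors = {a. \<exists>b. b \<noteq> 0 \<and> a * b = 0}"

definition Ann :: "'a::comm_ring_1 \<Rightarrow> 'a set" where
  "Ann a = {x. a * x = 0}"

definition orth_vertices :: "(('a::comm_ring_1)^('n::finite)^'n) set" where
  "orth_vertices = {x. x \<noteq> 0 \<and> (\<exists>y::'a^'n^'n. y \<noteq> 0 \<and> x ** y = 0) \<and> (\<exists>z::'a^'n^'n. z \<noteq> 0 \<and> z ** x = 0)}"

definition orth_adj :: "('a::comm_ring_1)^('n::finite)^'n \<Rightarrow> 'a^'n^'n \<Rightarrow> bool" where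
  "orth_adj x y \<longleftrightarrow> x \<in> orth_vertices \<and> y \<in> orth_vertices \<and> x \<noteq> y \<and> x ** y = 0 \<and> y ** x = 0"

definition orth_walk :: "('a::comm_ring_1)^('n::finite)^'n \<Rightarrow> 'a^'n^'n \<Rightarrow> nat \<Rightarrow> bool" where
  "orth_walk x y k \<longleftrightarrow> x \<in> orth_vertices \<and>
     (\<exists>p. p 0 = x \<and> p k = y \<and> (\<forall>i<k. orth_adj (p i) (p (Suc i))))"

definition orth_dist :: "('a::comm_ring_1)^('n::finite)^'n \<Rightarrow> 'a^'n^'n \<Rightarrow> enat" where
  "orth_dist x y = (if \<exists>k. orth_walk x y k then enat (LEAST k. orth_walk x y k) else \<infinity>)"

definition orth_ecc :: "('a::comm_ring_1)^('n::finite)^'n \<Rightarrow> enat" where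
  "orth_ecc v = (SUP w\<in>orth_vertices. orth_dist v w)"

definition orth_radius :: "('a::comm_ring_1) itself \<Rightarrow> 'n::finite itself \<Rightarrow> enat" where
  "orth_radius _ _ = (INF v\<in>(orth_vertices :: ('a^'n^'n) set). orth_ecc v)"

end

theory Submission
  imports Defs
begin

text \<open>
The determinant of a vertex W of the orthogonality graph of M_n(R) is a zero-divisor, since
adj(W) W = det(W) I kills every right annihilator of W. Conversely, a McCoy-type argument turns
t \<noteq> 0 with t det(W) = 0 into a nonzero U with WU = UW = 0 and bU = 0 for any b with bt = 0:
consider the matrices obtained from W by replacing some rows with standard unit rows, and take
the last number m of replaced rows for which some t' \<noteq> 0 with bt' = 0 kills all of their
determinants (m = 0 works with t, m = n fails); then t' times the adjugate of a suitable such
matrix with m replaced rows is the required U.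

With b = det(W), or a fixed nonzero zero-divisor when det(W) = 0, this yields the walk
E_11, bE_22, U, W, so the radius is at most 3 for every R. If some c \<noteq> 0 meets every Ann(a)
nontrivially, b = c yields the walk cI, U, W of length 2. For the lower bounds, let v_pq \<noteq> 0.
A matrix unit E_qm with m \<noteq> q is a vertex not orthogonal to v. If Ann(v_pq) \<inter> Ann(a) = 0 for a
zero-divisor a, the permutation matrix of the transposition of q and j with its (j,q) entry
replaced by a is a vertex whose neighbours are multiples xE_qj with ax = 0; such a neighbour
is orthogonal to v only if v_pq x = 0, so x = 0, and the vertex is at distance at least 3.
\<close>

definition replace_row :: "'a^'n^'m \<Rightarrow> 'm \<Rightarrow> 'a^'n \<Rightarrow> 'a^'n^'m" where
  "replace_row M l v = (\<chi> i. if i = l then v else M $ i)"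

text \<open>Entry (j, l) of the adjugate is the (l, j) cofactor, written as the determinant of M with
  row l replaced by the j-th unit row.\<close>
definition adjugate :: "'a::comm_ring_1^'n::finite^'n \<Rightarrow> 'a^'n^'n" where
  "adjugate M = (\<chi> j l. det (replace_row M l (axis j 1)))"

lemma det_replace_row_linear:
  fixes M :: "'a::comm_ring_1^'n::finite^'n"
  shows "det (replace_row M l v) = (\<Sum>j\<in>UNIV. v$j * det (replace_row M l (axis j 1)))"
proof -
  have "det (replace_row M l v) =
      det (\<chi> i. if i = l then (\<Sum>j\<in>UNIV. v$j *s axis j 1) else M$i)"
    by (simp only: basis_expansion replace_row_def)
  also have "\<dots> = (\<Sum>j\<in>UNIV. det (\<chi> i. if i = l then v$j *s axis j 1 else M$i))"
    by (rule det_linear_row_sum) simp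
  also have "\<dots> = (\<Sum>j\<in>UNIV. v$j * det (replace_row M l (axis j 1)))"
    unfolding replace_row_def by (simp only: det_row_mul)
  finally show ?thesis .
qed

lemma det_replace_row_axis_transpose:
  fixes M :: "'a::comm_ring_1^'n::finite^'n"
  shows "det (replace_row M l (axis j 1)) = det (replace_row (transpose M) j (axis l 1))"
proof -
  have "det (replace_row M l (axis j 1)) =
      det (transpose (replace_row (transpose M) j (axis l 1)))"
    unfolding det_def
  proof (rule sum.cong[OF refl])
    fix p assume "p \<in> {p. p permutes (UNIV::'n set)}"
    then have p: "p permutes (UNIV::'n set)" by simp
    let ?A = "replace_row M l (axis j 1)"
    let ?B = "transpose (replace_row (transpose M) j (axis l 1))"
    show "of_int (sign p) * (\<Prod>i\<in>UNIV. ?A $ i $ p i) = of_int (sign p) * (\<Prod>i\<in>UNIV. ?B $ i $ p i)"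
    proof (cases "p l = j")
      case True
      have "p i = j \<longleftrightarrow> i = l" for i using True permutes_inj[OF p] by (metis injD)
      then show ?thesis
        by (intro arg_cong[where f="\<lambda>x. _ * x"] prod.cong)
           (auto simp: replace_row_def transpose_def axis_def True)
    next
      case False
      obtain i0 where i0: "p i0 = j" using permutes_surj[OF p] by (metis surjD)
      with False have "i0 \<noteq> l" by auto
      have "(\<Prod>i\<in>UNIV. ?A $ i $ p i) = 0"
        by (rule prod_zero)
           (use False in \<open>auto simp: replace_row_def axis_def intro!: bexI[of _ l]\<close>)
      moreover have "(\<Prod>i\<in>UNIV. ?B $ i $ p i) = 0"
        by (rule prod_zero)
           (use i0 \<open>i0 \<noteq> l\<close> in
             \<open>auto simp: replace_row_def axis_def transpose_def intro!: bexI[of _ i0]\<close>)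
      ultimately show ?thesis by simp
    qed
  qed
  then show ?thesis by simp
qed

lemma det_replace_row_self:
  fixes M :: "'a::comm_ring_1^'n::finite^'n"
  shows "det (replace_row M l (M$i)) = (if i = l then det M else 0)"
proof (cases "i = l")
  case True
  then have "replace_row M l (M$i) = M" by (simp add: replace_row_def vec_eq_iff)
  then show ?thesis using True by simp
next
  case False
  then have "row i (replace_row M l (M$i)) = row l (replace_row M l (M$i))"
    by (simp add: row_def replace_row_def vec_eq_iff)
  then show ?thesis using False det_identical_rows[OF False] by simp
qed

lemma matrix_mul_adjugate: "M ** adjugate M = mat (det M)"
proof -
  have "(M ** adjugate M) $ i $ l = det (replace_row M l (M$i))" for i l
    by (simp add: matrix_matrix_mult_def adjugate_def det_replace_row_linear[of M l "M$i"])
  then show ?thesis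
    by (simp add: vec_eq_iff mat_def det_replace_row_self)
qed

lemma adjugate_matrix_mul: "adjugate M ** M = mat (det M)"
proof -
  have "(adjugate M ** M) $ j $ m = det (replace_row (transpose M) j (transpose M $ m))" for j m
  proof -
    have "(adjugate M ** M) $ j $ m = (\<Sum>l\<in>UNIV. M$l$m * det (replace_row M l (axis j 1)))"
      by (simp add: matrix_matrix_mult_def adjugate_def mult.commute)
    also have "\<dots> = (\<Sum>l\<in>UNIV. transpose M $ m $ l * det (replace_row (transpose M) j (axis l 1)))"
      by (rule sum.cong[OF refl]) (subst det_replace_row_axis_transpose, simp add: transpose_def)
    also have "\<dots> = det (replace_row (transpose M) j (transpose M $ m))"
      by (rule det_replace_row_linear[symmetric])
    finally show ?thesis .
  qed
  then show ?thesis
    by (simp add: vec_eq_iff mat_def det_replace_row_self)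
qed

lemma sum_mult_delta:
  fixes p :: "'n::finite" and f :: "'n \<Rightarrow> 'a::comm_ring_1"
  shows "(\<Sum>m\<in>UNIV. f m * (if m = p then c else 0)) = f p * c"
  by (simp add: if_distrib cong: if_cong)

lemma sum_delta_mult:
  fixes p :: "'n::finite" and f :: "'n \<Rightarrow> 'a::comm_ring_1"
  shows "(\<Sum>m\<in>UNIV. (if m = p then c else 0) * f m) = c * f p"
  using sum_mult_delta[of f p c] by (simp add: mult.commute)

lemma mat_mult_nth: "(mat c ** X) $ i $ j = c * X$i$j"
  by (simp add: matrix_matrix_mult_def mat_def if_distrib if_distribR sum.delta cong: if_cong)

lemma mult_mat_nth: "(X ** mat c) $ i $ j = X$i$j * (c::'a::comm_ring_1)"
  by (simp add: matrix_matrix_mult_def mat_def if_distrib if_distribR sum.delta' cong: if_cong)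

lemma mat_mult_mat: "mat c ** mat d = (mat (c * d) :: 'a::comm_ring_1^'n::finite^'n)"
proof -
  have "(mat c ** mat d) $ i $ j = (mat (c * d) :: 'a^'n^'n) $ i $ j" for i j
    by (simp only: mat_mult_nth) (simp add: mat_def)
  then show ?thesis by (simp add: vec_eq_iff)
qed

lemma mat_eq_0_iff: "(mat c :: 'a::comm_ring_1^'n::finite^'n) = 0 \<longleftrightarrow> c = 0"
  by (auto simp: vec_eq_iff mat_def)

lemma matrix_mul_mat_commute: "X ** mat c = mat c ** (X :: 'a::comm_ring_1^'n::finite^'n)"
  by (simp add: vec_eq_iff mat_mult_nth mult_mat_nth mult.commute)

lemma matrix_mul_mat_left_commute:
  fixes X Y :: "'a::comm_ring_1^'n::finite^'n"
  shows "X ** (mat c ** Y) = mat c ** (X ** Y)"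
proof -
  have "X ** mat c = mat c ** X" by (rule matrix_mul_mat_commute)
  then show ?thesis by (simp add: matrix_mul_assoc)
qed

definition matrix_unit :: "'n \<Rightarrow> 'n \<Rightarrow> 'a::zero \<Rightarrow> 'a^'n^'n" where
  "matrix_unit k l c = (\<chi> i j. if i = k \<and> j = l then c else 0)"

lemma matrix_unit_nth: "matrix_unit k l c $ i $ j = (if i = k \<and> j = l then c else 0)"
  by (simp add: matrix_unit_def)

lemma matrix_unit_mult_nth:
  "(matrix_unit k l c ** X) $ i $ j = (if i = k then c * X$l$j else (0::'a::comm_ring_1))"
  by (simp add: matrix_matrix_mult_def matrix_unit_def if_distrib if_distribR sum.delta cong: if_cong)

lemma mult_matrix_unit_nth:
  "(X ** matrix_unit k l c) $ i $ j = (if j = l then X$i$k * c else (0::'a::comm_ring_1))"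
  by (simp add: matrix_matrix_mult_def matrix_unit_def if_distrib if_distribR sum.delta' cong: if_cong)

lemma matrix_unit_eq_0_iff: "matrix_unit k l c = 0 \<longleftrightarrow> c = 0"
  by (auto simp: vec_eq_iff matrix_unit_def)

definition swap_matrix :: "'n \<Rightarrow> 'n \<Rightarrow> 'a::zero_neq_one \<Rightarrow> 'a^'n^'n" where
  "swap_matrix q j a = (\<chi> i. if i = q then axis j 1 else if i = j then axis q a else axis i 1)"

lemma swap_matrix_nth:
  assumes "q \<noteq> j"
  shows "swap_matrix q j a $ m $ k =
    (if k = j then (if m = q then 1 else 0) else if k = q then (if m = j then a else 0)
     else (if m = k then 1 else 0))"
  using assms by (auto simp: swap_matrix_def axis_def)

lemma swap_matrix_mult_nth:
  fixes U :: "'a::comm_ring_1^'n::finite^'n"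
  assumes "q \<noteq> j"
  shows "(swap_matrix q j a ** U) $ i $ k =
    (if i = q then U$j$k else if i = j then a * U$q$k else U$i$k)"
  using assms
  by (cases "i = q"; cases "i = j")
     (simp_all add: matrix_matrix_mult_def swap_matrix_def axis_def sum_delta_mult)

lemma mult_swap_matrix_nth:
  fixes U :: "'a::comm_ring_1^'n::finite^'n"
  assumes "q \<noteq> j"
  shows "(U ** swap_matrix q j a) $ i $ k =
    (if k = j then U$i$q else if k = q then U$i$j * a else U$i$k)"
  using assms
  by (cases "k = j"; cases "k = q")
     (simp_all add: matrix_matrix_mult_def swap_matrix_nth sum_mult_delta)

lemma swap_matrix_annihilator:
  fixes U :: "'a::comm_ring_1^'n::finite^'n"
  assumes "q \<noteq> j" "swap_matrix q j a ** U = 0" "U ** swap_matrix q j a = 0"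
  obtains x where "U = matrix_unit q j x" "a * x = 0"
proof -
  have left: "(if i = q then U$j$k else if i = j then a * U$q$k else U$i$k) = 0" for i k
    using assms(2) swap_matrix_mult_nth[OF assms(1), of a U i k] by simp
  have right: "(if k = j then U$i$q else if k = q then U$i$j * a else U$i$k) = 0" for i k
    using assms(3) mult_swap_matrix_nth[OF assms(1), of U a i k] by simp
  have "a * U$q$j = 0"
    using left[of j j] assms(1) by simp
  have "U$i$k = 0" if "i \<noteq> q \<or> k \<noteq> j" for i k
    using that left[where i=i and k=k] left[where i=q and k=k]
      right[where i=q and k=j] right[where i=q and k=k] assms(1)
    by (auto split: if_splits)
  then have "U = matrix_unit q j (U$q$j)"
    by (auto simp: vec_eq_iff matrix_unit_def)
  with \<open>a * U$q$j = 0\<close> show ?thesis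
    using that by blast
qed

definition replace_rows :: "'a::zero_neq_one^'n^'n \<Rightarrow> 'n set \<Rightarrow> ('n \<Rightarrow> 'n) \<Rightarrow> 'a^'n^'n" where
  "replace_rows W T g = (\<chi> i. if i \<in> T then axis (g i) 1 else W$i)"

lemma replace_row_replace_rows:
  "replace_row (replace_rows W T g) l (axis j 1) = replace_rows W (insert l T) (g(l := j))"
  by (auto simp: replace_row_def replace_rows_def vec_eq_iff)

lemma det_replace_row_replace_rows_swap:
  fixes W :: "'a::comm_ring_1^'n::finite^'n"
  assumes "i \<in> T" "l \<notin> T"
  shows "det (replace_row (replace_rows W T g) l (W$i)) =
    - det (replace_rows W (insert l (T - {i})) (g(l := g i)))"
proof -
  have il: "i \<noteq> l" using assms by auto
  have "replace_row (replace_rows W T g) l (W$i) =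
      (\<chi> r. replace_rows W (insert l (T - {i})) (g(l := g i)) $ Transposition.transpose i l r)"
    using assms il
    by (auto simp: vec_eq_iff replace_row_def replace_rows_def Transposition.transpose_def)
  then show ?thesis
    by (simp add: det_permute_rows permutes_swap_id sign_swap_id il)
qed

lemma adjugate_replace_rows_nth:
  "adjugate (replace_rows W T g) $ j $ l = det (replace_rows W (insert l T) (g(l := j)))"
  by (simp add: adjugate_def replace_row_replace_rows)

lemma mult_adjugate_replace_rows_eq_0:
  fixes W :: "'a::comm_ring_1^'n::finite^'n"
  assumes killed: "\<And>T g. card T = m \<Longrightarrow> t * det (replace_rows W T g) = 0" and "card T = m"
  shows "(mat t ** adjugate (replace_rows W T g)) ** W = 0"
proof -
  let ?M = "replace_rows W T g"
  let ?U = "mat t ** adjugate ?M"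
  have column_0: "?U $ j $ l = 0" if "l \<in> T" for j l
    using killed[of "insert l T"] \<open>card T = m\<close> that
    by (simp add: mat_mult_nth adjugate_replace_rows_nth insert_absorb)
  have "?U $ j $ l * W $ l $ k = ?U $ j $ l * ?M $ l $ k" for j l k
    by (cases "l \<in> T") (simp add: column_0, simp add: replace_rows_def)
  then have "?U ** W = ?U ** ?M"
    by (simp add: matrix_matrix_mult_def)
  also have "\<dots> = mat (t * det ?M)"
    by (simp add: matrix_mul_assoc[symmetric] adjugate_matrix_mul mat_mult_mat)
  also have "\<dots> = 0"
    using killed[OF \<open>card T = m\<close>] by simp
  finally show ?thesis .
qed

lemma adjugate_replace_rows_mult_eq_0:
  fixes W :: "'a::comm_ring_1^'n::finite^'n"
  assumes killed: "\<And>T g. card T = m \<Longrightarrow> t * det (replace_rows W T g) = 0" and "card T = m"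
  shows "W ** (mat t ** adjugate (replace_rows W T g)) = 0"
proof -
  let ?M = "replace_rows W T g"
  have "t * (\<Sum>j\<in>UNIV. W$i$j * adjugate ?M $ j $ l) = 0" for i l
  proof (cases "i \<in> T")
    case False
    then have "(\<Sum>j\<in>UNIV. W$i$j * adjugate ?M $ j $ l) = (?M ** adjugate ?M) $ i $ l"
      by (simp add: matrix_matrix_mult_def replace_rows_def)
    then show ?thesis
      using killed[OF \<open>card T = m\<close>] by (simp add: matrix_mul_adjugate mat_def)
  next
    case i: True
    show ?thesis
    proof (cases "l \<in> T")
      case True
      then have "t * adjugate ?M $ j $ l = 0" for j
        using killed[of T "g(l := j)"] \<open>card T = m\<close>
        by (simp add: adjugate_replace_rows_nth insert_absorb)
      then show ?thesis
        unfolding sum_distrib_left by (simp add: mult.left_commute[of t])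
    next
      case False
      have "card (insert l (T - {i})) = card T"
        using i False card.remove[of T i] by simp
      then have "t * det (replace_rows W (insert l (T - {i})) (g(l := g i))) = 0"
        using killed \<open>card T = m\<close> by simp
      moreover have "(\<Sum>j\<in>UNIV. W$i$j * adjugate ?M $ j $ l) = det (replace_row ?M l (W$i))"
        by (simp add: adjugate_def det_replace_row_linear[of ?M l "W$i"])
      ultimately show ?thesis
        by (simp add: det_replace_row_replace_rows_swap[OF i False])
    qed
  qed
  then have "mat t ** (W ** adjugate ?M) = 0"
    by (simp add: vec_eq_iff mat_mult_nth) (simp add: matrix_matrix_mult_def)
  then show ?thesis by (simp add: matrix_mul_mat_left_commute)
qed

lemma two_sided_annihilator_killed_by:
  fixes W :: "'a::comm_ring_1^'n::finite^'n"
  assumes "t0 \<noteq> 0" "b * t0 = 0" "t0 * det W = 0"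
  obtains U where "U \<noteq> 0" "W ** U = 0" "U ** W = 0" "\<And>i j. b * U $ i $ j = 0"
proof -
  define good where "good m \<longleftrightarrow> (\<exists>t. t \<noteq> 0 \<and> b * t = 0 \<and>
      (\<forall>T g. card T = m \<longrightarrow> t * det (replace_rows W T g) = 0))" for m
  have "good 0"
    unfolding good_def using assms by (intro exI[of _ t0]) (simp add: replace_rows_def)
  have "replace_rows W UNIV (\<lambda>i. i) = mat 1"
    by (simp add: replace_rows_def axis_def mat_def vec_eq_iff)
  then have "\<not> good CARD('n)"
    unfolding good_def by (metis card_UNIV det_I mult_1_right)
  define m' where "m' = (LEAST m. \<not> good m)"
  have "\<not> good m'"
    unfolding m'_def using \<open>\<not> good CARD('n)\<close> by (rule LeastI)
  then obtain m where m': "m' = Suc m"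
    using \<open>good 0\<close> by (cases m') auto
  then have "good m"
    using not_less_Least[of m "\<lambda>m. \<not> good m"] by (auto simp: m'_def)
  then obtain t where t: "t \<noteq> 0" "b * t = 0"
    and killed: "\<And>T g. card T = m \<Longrightarrow> t * det (replace_rows W T g) = 0"
    unfolding good_def by blast
  from \<open>\<not> good m'\<close> t obtain T' g
    where T': "card T' = Suc m" "t * det (replace_rows W T' g) \<noteq> 0"
    unfolding good_def m' by blast
  then obtain p where "p \<in> T'" by fastforce
  define T where "T = T' - {p}"
  have "card T = m" "insert p T = T'"
    using T'(1) \<open>p \<in> T'\<close> by (auto simp: T_def)
  define U where "U = mat t ** adjugate (replace_rows W T g)"
  have "U $ g p $ p = t * det (replace_rows W T' g)"
    using \<open>insert p T = T'\<close> by (simp add: U_def mat_mult_nth adjugate_replace_rows_nth)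
  then have "U \<noteq> 0"
    using T'(2) by auto
  moreover have "W ** U = 0"
    unfolding U_def using killed \<open>card T = m\<close> by (rule adjugate_replace_rows_mult_eq_0)
  moreover have "U ** W = 0"
    unfolding U_def using killed \<open>card T = m\<close> by (rule mult_adjugate_replace_rows_eq_0)
  moreover have "b * U $ i $ j = 0" for i j
    using t(2) by (simp add: U_def mat_mult_nth mult.assoc[symmetric])
  ultimately show ?thesis using that by blast
qed

lemma zero_in_zero_divisors: "0 \<in> zero_divisors"
  by (auto simp: zero_divisors_def intro: exI[of _ 1])

lemma Ann_Int_Ann_neq_zero_iff:
  "Ann c \<inter> Ann a \<noteq> {0} \<longleftrightarrow> (\<exists>x. x \<noteq> 0 \<and> c * x = 0 \<and> a * x = 0)"
  by (auto simp: Ann_def)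

lemma det_in_zero_divisors:
  fixes W :: "'a::comm_ring_1^'n::finite^'n"
  assumes "Y \<noteq> 0" "W ** Y = 0"
  shows "det W \<in> zero_divisors"
proof -
  obtain i j where "Y $ i $ j \<noteq> 0"
    using \<open>Y \<noteq> 0\<close> by (auto simp: vec_eq_iff)
  have "mat (det W) ** Y = adjugate W ** (W ** Y)"
    by (simp add: matrix_mul_assoc adjugate_matrix_mul)
  then have "det W * Y $ i $ j = 0"
    using \<open>W ** Y = 0\<close> by (metis mat_mult_nth times0_right zero_index)
  with \<open>Y $ i $ j \<noteq> 0\<close> show ?thesis
    by (auto simp: zero_divisors_def)
qed

lemma exists_other_index:
  fixes i :: "'n::finite"
  assumes "1 < CARD('n)"
  obtains j where "j \<noteq> i"
proof -
  obtain a b :: 'n where "a \<noteq> b"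
    using assms card_le_Suc0_iff_eq[of "UNIV::'n set"] by auto
  then show ?thesis using that by metis
qed

lemma in_orth_verticesI:
  "x \<noteq> 0 \<Longrightarrow> y \<noteq> 0 \<Longrightarrow> x ** y = 0 \<Longrightarrow> y ** x = 0 \<Longrightarrow> x \<in> orth_vertices"
  unfolding orth_vertices_def by blast

lemma orth_vertex_det_in_zero_divisors: "w \<in> orth_vertices \<Longrightarrow> det w \<in> zero_divisors"
  unfolding orth_vertices_def using det_in_zero_divisors by blast

lemma orth_walk_append:
  assumes "orth_walk x y k" "orth_walk y z l"
  shows "orth_walk x z (k + l)"
proof -
  from assms(1) obtain p where p: "x \<in> orth_vertices" "p 0 = x" "p k = y"
    "\<forall>i<k. orth_adj (p i) (p (Suc i))"
    unfolding orth_walk_def by blast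
  from assms(2) obtain q where q: "q 0 = y" "q l = z" "\<forall>i<l. orth_adj (q i) (q (Suc i))"
    unfolding orth_walk_def by blast
  define r where "r i = (if i \<le> k then p i else q (i - k))" for i
  have "orth_adj (r i) (r (Suc i))" if "i < k + l" for i
  proof (cases "i < k")
    case True
    then show ?thesis using p(4) by (simp add: r_def)
  next
    case False
    then have "r i = q (i - k)" "r (Suc i) = q (Suc (i - k))"
      using p(3) q(1) by (auto simp: r_def Suc_diff_le)
    then show ?thesis using q(3) that False by simp
  qed
  moreover have "r 0 = x" "r (k + l) = z"
    using p q by (auto simp: r_def)
  ultimately show ?thesis
    using p(1) unfolding orth_walk_def by blast
qed

lemma orth_walk_0D: "orth_walk x y 0 \<Longrightarrow> x = y"
  unfolding orth_walk_def by auto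

lemma orth_walk_1D: "orth_walk x y 1 \<Longrightarrow> orth_adj x y"
  unfolding orth_walk_def by auto

lemma orth_walk_2D: "orth_walk x y 2 \<Longrightarrow> \<exists>u. orth_adj x u \<and> orth_adj u y"
  unfolding orth_walk_def by (metis One_nat_def Suc_1 lessI zero_less_Suc)

lemma orth_dist_le: "orth_walk x y k \<Longrightarrow> orth_dist x y \<le> enat k"
  unfolding orth_dist_def by (auto intro: Least_le)

lemma orth_walk_orth_dist: "orth_dist x y = enat k \<Longrightarrow> orth_walk x y k"
  unfolding orth_dist_def by (auto split: if_splits intro: LeastI)

lemma enat_le_orth_dist: "(\<And>k. k < K \<Longrightarrow> \<not> orth_walk x y k) \<Longrightarrow> enat K \<le> orth_dist x y"
  unfolding orth_dist_def by (auto intro: LeastI2_ex simp: not_less[symmetric])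

lemma orth_dist_triangle: "orth_dist x z \<le> orth_dist x y + orth_dist y z"
proof (cases "orth_dist x y" ; cases "orth_dist y z")
  fix k l assume "orth_dist x y = enat k" "orth_dist y z = enat l"
  then have "orth_walk x z (k + l)"
    by (blast intro: orth_walk_append orth_walk_orth_dist)
  then show ?thesis
    using \<open>orth_dist x y = enat k\<close> \<open>orth_dist y z = enat l\<close> by (simp add: orth_dist_le)
qed simp_all

lemma orth_dist_le_1:
  assumes "x \<noteq> 0" "y \<noteq> 0" "x ** y = 0" "y ** x = 0"
  shows "orth_dist x y \<le> 1"
proof -
  have "x \<in> orth_vertices" "y \<in> orth_vertices"
    using assms in_orth_verticesI by blast+
  then have "orth_walk x y (if x = y then 0 else 1)"
    using assms unfolding orth_walk_def orth_adj_def
    by (intro conjI exI[of _ "\<lambda>i. if i = 0 then x else y"]) auto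
  then have "orth_dist x y \<le> enat (if x = y then 0 else 1)"
    by (rule orth_dist_le)
  also have "\<dots> \<le> 1"
    by (simp add: one_enat_def)
  finally show ?thesis .
qed

lemma two_le_orth_dist:
  assumes "x \<noteq> y" "\<not> orth_adj x y"
  shows "2 \<le> orth_dist x y"
proof -
  have "\<not> orth_walk x y k" if "k < 2" for k
    using that assms orth_walk_0D orth_walk_1D by (fastforce simp: less_2_cases_iff)
  then have "enat 2 \<le> orth_dist x y"
    by (rule enat_le_orth_dist)
  then show ?thesis
    by (simp add: numeral_eq_enat)
qed

lemma three_le_orth_dist:
  assumes "x \<noteq> y" "\<not> orth_adj x y" "\<nexists>u. orth_adj x u \<and> orth_adj u y"
  shows "3 \<le> orth_dist x y"
proof -
  have "\<not> orth_walk x y k" if "k < 3" for k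
  proof -
    have "k = 0 \<or> k = 1 \<or> k = 2" using that by auto
    then show ?thesis
      using assms orth_walk_0D orth_walk_1D orth_walk_2D by blast
  qed
  then have "enat 3 \<le> orth_dist x y"
    by (rule enat_le_orth_dist)
  then show ?thesis
    by (simp add: numeral_eq_enat)
qed

lemma orth_ecc_le: "(\<And>w. w \<in> orth_vertices \<Longrightarrow> orth_dist v w \<le> K) \<Longrightarrow> orth_ecc v \<le> K"
  unfolding orth_ecc_def by (rule SUP_least)

lemma le_orth_ecc: "w \<in> orth_vertices \<Longrightarrow> K \<le> orth_dist v w \<Longrightarrow> K \<le> orth_ecc v"
  unfolding orth_ecc_def by (rule SUP_upper2)

lemma two_le_orth_ecc:
  fixes v :: "'a::comm_ring_1^'n::finite^'n"
  assumes "1 < CARD('n)" "v \<in> orth_vertices"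
  shows "2 \<le> orth_ecc v"
proof -
  obtain k l where kl: "v $ k $ l \<noteq> 0"
    using assms(2) by (auto simp: orth_vertices_def vec_eq_iff)
  obtain m where "m \<noteq> l"
    using exists_other_index[OF assms(1)] by blast
  define E :: "'a^'n^'n" where "E = matrix_unit l m 1"
  have "E ** matrix_unit l l 1 = 0" "matrix_unit m m 1 ** E = 0"
    using \<open>m \<noteq> l\<close> by (auto simp: vec_eq_iff E_def matrix_unit_mult_nth matrix_unit_nth)
  moreover have "E \<noteq> 0" "matrix_unit l l 1 \<noteq> (0::'a^'n^'n)" "matrix_unit m m 1 \<noteq> (0::'a^'n^'n)"
    by (simp_all add: E_def matrix_unit_eq_0_iff)
  ultimately have "E \<in> orth_vertices"
    unfolding orth_vertices_def by blast
  have "(v ** E) $ k $ m = v $ k $ l"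
    by (simp add: E_def mult_matrix_unit_nth)
  then have "\<not> orth_adj v E"
    using kl by (auto simp: orth_adj_def)
  moreover have "v \<noteq> E"
    using kl \<open>m \<noteq> l\<close> by (auto simp: E_def matrix_unit_nth)
  ultimately show ?thesis
    using \<open>E \<in> orth_vertices\<close> two_le_orth_dist le_orth_ecc by blast
qed

lemma orth_ecc_matrix_unit_le_3:
  fixes i j :: "'n::finite"
  assumes "i \<noteq> j" "z \<noteq> 0" "w \<noteq> 0" "z * w = (0::'a::comm_ring_1)"
  shows "orth_ecc (matrix_unit i i 1 :: 'a^'n^'n) \<le> 3"
proof (rule orth_ecc_le)
  fix W :: "'a^'n^'n" assume "W \<in> orth_vertices"
  then obtain y where "y \<noteq> 0" "det W * y = 0"
    using orth_vertex_det_in_zero_divisors by (auto simp: zero_divisors_def)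
  obtain b t where bt: "b \<noteq> 0" "t \<noteq> 0" "b * t = 0" "t * det W = 0"
  proof (cases "det W = 0")
    case True
    then show ?thesis using that assms by auto
  next
    case False
    then show ?thesis using that \<open>y \<noteq> 0\<close> \<open>det W * y = 0\<close> by (simp add: mult.commute)
  qed
  then obtain U where U: "U \<noteq> 0" "W ** U = 0" "U ** W = 0" "\<And>i j. b * U $ i $ j = 0"
    using two_sided_annihilator_killed_by by metis
  define E :: "'a^'n^'n" where "E = matrix_unit i i 1"
  define B :: "'a^'n^'n" where "B = matrix_unit j j b"
  have "E \<noteq> 0" "B \<noteq> 0"
    using bt(1) by (simp_all add: E_def B_def matrix_unit_eq_0_iff)
  have "E ** B = 0" "B ** E = 0"
    using assms(1) by (auto simp: E_def B_def vec_eq_iff matrix_unit_mult_nth matrix_unit_nth)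
  with \<open>E \<noteq> 0\<close> \<open>B \<noteq> 0\<close> have EB: "orth_dist E B \<le> 1"
    by (intro orth_dist_le_1)
  have "B ** U = 0" "U ** B = 0"
    using U(4) by (auto simp: B_def vec_eq_iff matrix_unit_mult_nth mult_matrix_unit_nth mult.commute)
  with \<open>B \<noteq> 0\<close> U(1) have BU: "orth_dist B U \<le> 1"
    by (intro orth_dist_le_1)
  have UW: "orth_dist U W \<le> 1"
    using U \<open>W \<in> orth_vertices\<close> by (intro orth_dist_le_1) (auto simp: orth_vertices_def)
  have "orth_dist E W \<le> orth_dist E B + orth_dist B W"
    by (rule orth_dist_triangle)
  also have "\<dots> \<le> orth_dist E B + (orth_dist B U + orth_dist U W)"
    by (intro add_left_mono orth_dist_triangle)
  also have "\<dots> \<le> 1 + (1 + 1)"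
    by (intro add_mono EB BU UW)
  finally show "orth_dist (matrix_unit i i 1) W \<le> 3"
    by (simp add: E_def)
qed

lemma mat_in_orth_vertices_and_ecc_le_2:
  fixes c :: "'a::comm_ring_1"
  assumes "c \<noteq> 0" and meets: "\<forall>a\<in>zero_divisors. Ann c \<inter> Ann a \<noteq> {0}"
  shows "(mat c :: 'a^'n::finite^'n) \<in> orth_vertices" "orth_ecc (mat c :: 'a^'n^'n) \<le> 2"
proof -
  have annihilated: "mat c ** U = 0" "U ** mat c = 0"
    if "\<And>i j. c * U $ i $ j = 0" for U :: "'a^'n^'n"
    using that by (simp_all add: vec_eq_iff mat_mult_nth mult_mat_nth mult.commute)
  have "mat c \<noteq> (0::'a^'n^'n)"
    using \<open>c \<noteq> 0\<close> by (simp add: mat_eq_0_iff)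
  obtain s where "s \<noteq> 0" "c * s = 0"
    using meets zero_in_zero_divisors by (auto simp: Ann_Int_Ann_neq_zero_iff)
  then have "mat s \<noteq> (0::'a^'n^'n)" "c * mat s $ i $ j = 0" for i j
    by (simp add: mat_eq_0_iff, simp add: mat_def)
  then show "(mat c :: 'a^'n^'n) \<in> orth_vertices"
    using \<open>mat c \<noteq> 0\<close> annihilated[of "mat s"] by (intro in_orth_verticesI) auto
  show "orth_ecc (mat c :: 'a^'n^'n) \<le> 2"
  proof (rule orth_ecc_le)
    fix W :: "'a^'n^'n" assume "W \<in> orth_vertices"
    then obtain x where "x \<noteq> 0" "c * x = 0" "det W * x = 0"
      using meets orth_vertex_det_in_zero_divisors by (fastforce simp: Ann_Int_Ann_neq_zero_iff)
    then obtain U where U: "U \<noteq> 0" "W ** U = 0" "U ** W = 0" "\<And>i j. c * U $ i $ j = 0"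
      using two_sided_annihilator_killed_by[of x c W] by (auto simp: mult.commute)
    have "orth_dist (mat c) W \<le> orth_dist (mat c) U + orth_dist U W"
      by (rule orth_dist_triangle)
    also have "\<dots> \<le> 1 + 1"
      using U \<open>mat c \<noteq> 0\<close> \<open>W \<in> orth_vertices\<close> annihilated[OF U(4)]
      by (intro add_mono orth_dist_le_1) (auto simp: orth_vertices_def)
    finally show "orth_dist (mat c) W \<le> 2"
      by simp
  qed
qed

lemma three_le_orth_ecc:
  fixes v :: "'a::comm_ring_1^'n::finite^'n"
  assumes "1 < CARD('n)" "v \<in> orth_vertices"
    and no_meets: "\<nexists>c::'a. c \<noteq> 0 \<and> (\<forall>a\<in>zero_divisors. Ann c \<inter> Ann a \<noteq> {0})"
  shows "3 \<le> orth_ecc v"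
proof -
  obtain p q where "v $ p $ q \<noteq> 0"
    using assms(2) by (auto simp: orth_vertices_def vec_eq_iff)
  define c where "c = v $ p $ q"
  have "c \<noteq> 0"
    using \<open>v $ p $ q \<noteq> 0\<close> by (simp add: c_def)
  with no_meets have "\<exists>a\<in>zero_divisors. Ann c \<inter> Ann a = {0}"
    by auto
  then obtain a where "a \<in> zero_divisors" "Ann c \<inter> Ann a = {0}" ..
  then have no_common: "x = 0" if "c * x = 0" "a * x = 0" for x
    using that Ann_Int_Ann_neq_zero_iff[of c a] by blast
  obtain s where "s \<noteq> 0" "a * s = 0"
    using \<open>a \<in> zero_divisors\<close> by (auto simp: zero_divisors_def)
  obtain j where "j \<noteq> q"
    using exists_other_index[OF assms(1)] by blast
  then have "q \<noteq> j" by simp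
  define T :: "'a^'n^'n" where "T = swap_matrix q j a"
  have "T ** matrix_unit q j s = 0" "matrix_unit q j s ** T = 0"
    using \<open>q \<noteq> j\<close> \<open>a * s = 0\<close>
    by (auto simp: T_def vec_eq_iff swap_matrix_mult_nth mult_swap_matrix_nth matrix_unit_nth
        mult.commute)
  moreover have "T \<noteq> 0"
    using \<open>q \<noteq> j\<close> by (auto simp: T_def vec_eq_iff swap_matrix_def axis_def)
  ultimately have "T \<in> orth_vertices"
    using \<open>s \<noteq> 0\<close> by (intro in_orth_verticesI) (auto simp: matrix_unit_eq_0_iff)
  have "v \<noteq> T"
  proof
    assume "v = T"
    then have "c = (if p = j then a else 0)"
      using \<open>q \<noteq> j\<close> by (auto simp: c_def T_def swap_matrix_nth)
    then show False
      using \<open>v $ p $ q \<noteq> 0\<close> no_common[of s] \<open>s \<noteq> 0\<close> \<open>a * s = 0\<close>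
      by (auto simp: c_def split: if_splits)
  qed
  moreover have "\<not> orth_adj v T"
  proof
    assume "orth_adj v T"
    then have "swap_matrix q j a ** v = 0" "v ** swap_matrix q j a = 0"
      by (auto simp: orth_adj_def T_def)
    then obtain x where "v = matrix_unit q j x"
      by (rule swap_matrix_annihilator[OF \<open>q \<noteq> j\<close>])
    then show False
      using \<open>q \<noteq> j\<close> \<open>v $ p $ q \<noteq> 0\<close> by (simp add: matrix_unit_nth)
  qed
  moreover have "\<nexists>u. orth_adj v u \<and> orth_adj u T"
  proof
    assume "\<exists>u. orth_adj v u \<and> orth_adj u T"
    then obtain u where "v ** u = 0" "u \<noteq> 0" "T ** u = 0" "u ** T = 0"
      by (auto simp: orth_adj_def orth_vertices_def)
    then obtain x where x: "u = matrix_unit q j x" "a * x = 0"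
      using swap_matrix_annihilator[OF \<open>q \<noteq> j\<close>] by (auto simp: T_def)
    have "c * x = (v ** u) $ p $ j"
      by (simp add: x(1) c_def mult_matrix_unit_nth)
    then have "x = 0"
      using no_common x(2) \<open>v ** u = 0\<close> by simp
    then show False
      using x(1) \<open>u \<noteq> 0\<close> by (simp add: matrix_unit_eq_0_iff)
  qed
  ultimately show ?thesis
    using \<open>T \<in> orth_vertices\<close> three_le_orth_dist le_orth_ecc by blast
qed

lemma two_le_orth_radius:
  assumes "1 < CARD('n::finite)"
  shows "2 \<le> orth_radius TYPE('a::comm_ring_1) TYPE('n)"
  unfolding orth_radius_def by (rule INF_greatest) (rule two_le_orth_ecc[OF assms])

lemma orth_radius_le_3:
  assumes "(zero_divisors :: 'a::comm_ring_1 set) \<noteq> {0}" "1 < CARD('n::finite)"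
  shows "orth_radius TYPE('a) TYPE('n) \<le> 3"
proof -
  obtain z :: 'a where "z \<in> zero_divisors" "z \<noteq> 0"
    using assms(1) zero_in_zero_divisors by blast
  then obtain w where "w \<noteq> 0" "z * w = 0"
    by (auto simp: zero_divisors_def)
  obtain i j :: 'n where "i \<noteq> j"
    using exists_other_index[OF assms(2)] by metis
  then have "matrix_unit i i 1 ** matrix_unit j j 1 = (0::'a^'n^'n)"
    "matrix_unit j j 1 ** matrix_unit i i 1 = (0::'a^'n^'n)"
    by (auto simp: vec_eq_iff matrix_unit_mult_nth matrix_unit_nth)
  then have "(matrix_unit i i 1 :: 'a^'n^'n) \<in> orth_vertices"
    by (intro in_orth_verticesI) (auto simp: matrix_unit_eq_0_iff)
  then show ?thesis
    unfolding orth_radius_def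
    using orth_ecc_matrix_unit_le_3[OF \<open>i \<noteq> j\<close> \<open>z \<noteq> 0\<close> \<open>w \<noteq> 0\<close> \<open>z * w = 0\<close>]
    by (rule INF_lower2)
qed

lemma orth_radius_eq_2_iff:
  assumes "1 < CARD('n::finite)"
  shows "orth_radius TYPE('a::comm_ring_1) TYPE('n) = 2 \<longleftrightarrow>
    (\<exists>c::'a. c \<noteq> 0 \<and> (\<forall>a\<in>zero_divisors. Ann c \<inter> Ann a \<noteq> {0}))"
proof
  assume "\<exists>c::'a. c \<noteq> 0 \<and> (\<forall>a\<in>zero_divisors. Ann c \<inter> Ann a \<noteq> {0})"
  then obtain c :: 'a where "c \<noteq> 0" "\<forall>a\<in>zero_divisors. Ann c \<inter> Ann a \<noteq> {0}"
    by blast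
  from mat_in_orth_vertices_and_ecc_le_2[OF this]
  have "orth_radius TYPE('a) TYPE('n) \<le> 2"
    unfolding orth_radius_def by (rule INF_lower2)
  with two_le_orth_radius[OF assms, where 'a='a] show "orth_radius TYPE('a) TYPE('n) = 2"
    by simp
next
  assume "orth_radius TYPE('a) TYPE('n) = 2"
  show "\<exists>c::'a. c \<noteq> 0 \<and> (\<forall>a\<in>zero_divisors. Ann c \<inter> Ann a \<noteq> {0})"
  proof (rule ccontr)
    assume "\<nexists>c::'a. c \<noteq> 0 \<and> (\<forall>a\<in>zero_divisors. Ann c \<inter> Ann a \<noteq> {0})"
    then have "3 \<le> orth_radius TYPE('a) TYPE('n)"
      unfolding orth_radius_def by (intro INF_greatest three_le_orth_ecc[OF assms])
    with \<open>orth_radius TYPE('a) TYPE('n) = 2\<close> show False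
      by (simp add: numeral_eq_enat)
  qed
qed

theorem theorem2:
  assumes "(zero_divisors :: 'a::comm_ring_1 set) \<noteq> {0}"
    and "CARD('n::finite) > 1"
  defines "r \<equiv> orth_radius TYPE('a) TYPE('n)"
  shows "(2 \<le> r \<and> r \<le> 4)
    \<and> ((\<forall>a0\<in>(zero_divisors :: 'a set). \<exists>a1 a2. a1 \<noteq> 0 \<and> a2 \<noteq> 0 \<and>
            (let a = [a0, a1, a2] in \<forall>i<3. \<forall>j<3. i \<noteq> j \<longrightarrow> a ! i * a ! j = 0))
         \<longrightarrow> r \<in> {2, 3})
    \<and> (r = 2 \<longleftrightarrow> (\<exists>c::'a. c \<noteq> 0 \<and> (\<forall>a\<in>zero_divisors. Ann c \<inter> Ann a \<noteq> {0})))"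
proof -
  have "2 \<le> r" "r \<le> 3"
    unfolding r_def using two_le_orth_radius orth_radius_le_3 assms(1,2) by blast+
  then have "r \<in> {2, 3}"
    by (cases r) (auto simp: numeral_eq_enat)
  moreover have "r \<le> 4"
    using \<open>r \<le> 3\<close> order_trans[of r 3 4] by (simp add: numeral_eq_enat)
  ultimately show ?thesis
    using \<open>2 \<le> r\<close> orth_radius_eq_2_iff[OF assms(2)] by (simp add: r_def)
qed

end
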